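(* In the sleeping multi-armed bandit setting, let $(\ell_t)_{t\ge1}$ be i.i.d. random loss vectors in $[0,1]^K$ with mean vector $\mu$, where for each $t$, $\ell_t$ is independent of everything determined before the learner observes $\ell_t(k_t)$ at round $t$ (including $S_1,\dots,S_t$ and $k_1,\dots,k_t$), and let $(S_t)_{t\ge1}$ be any sequence of availability sets such that $S_t$ may depend only on $(\ell_s)_{s\le t-1}$ (and past play). Then for any algorithm, $$\max_{\pi}R_T^{\mathrm{policy}}(\pi)=\max_{\sigma}\mathbb E\big[R_T^{\mathrm{ordering}}(\sigma)\big],$$ where $\pi$ ranges over all policies and $\sigma$ over all orderings of $[K]$.
   Context: Sleeping multi-armed bandit setting: $K$ arms $[K]$. At each round $t$ a nonempty availability set $S_t\subseteq[K]$ is revealed, the learner (possibly randomized, using only $S_1,\dots,S_t$, previously observed losses and internal randomness) selects $k_t\in S_t$ and observes $\ell_t(k_t)$. An ordering is a permutation $\sigma=(\sigma_1,\dots,\sigma_K)$ of $[K]$; for nonempty $S\subseteq[K]$, $\sigma(S)=\sigma_m$ with $m=\min\{i:\sigma_i\in S\}$. Ordering regret: $R_T^{\mathrm{ordering}}(\sigma)=\sum_{t=1}^T\big(\ell_t(k_t)-\ell_t(\sigma(S_t))\big)$. A policy is a map $\pi$ from nonempty subsets of $[K]$ to $[K]$ with $\pi(S)\in S$. Policy regret: $R_T^{\mathrm{policy}}(\pi)=\mathbb E\big[\sum_{t=1}^T\ell_t(k_t)-\sum_{t=1}^T\ell_t(\pi(S_t))\big]$, the expectation being over availabilities, losses and the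 learner's randomness. *)

theory Defs
  imports "HOL-Probability.Probability"
begin

text \<open>Arms are the elements of a finite type 'k (playing the role of [K], K = CARD('k)).
  An ordering is a list enumerating every arm exactly once.\<close>

definition orderings :: "'k::finite list set" where
  "orderings = {xs. distinct xs \<and> set xs = UNIV}"

definition ord_select :: "'k list \<Rightarrow> 'k set \<Rightarrow> 'k" where
  "ord_select xs S = hd (filter (\<lambda>x. x \<in> S) xs)"

definition policies :: "('k set \<Rightarrow> 'k) set" where
  "policies = {\<pi>. \<forall>S. S \<noteq> {} \<longrightarrow> \<pi> S \<in> S}"

definition loss_space :: "('k \<Rightarrow> real) measure" where
  "loss_space = Pi\<^sub>M UNIV (\<lambda>_. borel)"

definition ordering_regret ::
  "(nat \<Rightarrow> 'w \<Rightarrow> 'k \<Rightarrow> real) \<Rightarrow> (nat \<Rightarrow> 'w \<Rightarrow> 'k set) \<Rightarrow> (nat \<Rightarrow> 'w \<Rightarrow> 'k)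
    \<Rightarrow> nat \<Rightarrow> 'k list \<Rightarrow> 'w \<Rightarrow> real" where
  "ordering_regret L S k T \<sigma> \<omega> =
     (\<Sum>t\<in>{1..T}. L t \<omega> (k t \<omega>) - L t \<omega> (ord_select \<sigma> (S t \<omega>)))"

definition policy_regret ::
  "'w measure \<Rightarrow> (nat \<Rightarrow> 'w \<Rightarrow> 'k \<Rightarrow> real) \<Rightarrow> (nat \<Rightarrow> 'w \<Rightarrow> 'k set) \<Rightarrow> (nat \<Rightarrow> 'w \<Rightarrow> 'k)
    \<Rightarrow> nat \<Rightarrow> ('k set \<Rightarrow> 'k) \<Rightarrow> real" where
  "policy_regret M L S k T \<pi> =
     (\<integral>\<omega>. (\<Sum>t\<in>{1..T}. L t \<omega> (k t \<omega>)) \<partial>M) - (\<integral>\<omega>. (\<Sum>t\<in>{1..T}. L t \<omega> (\<pi> (S t \<omega>))) \<partial>M)"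

text \<open>History strictly before observing the loss of round t: past loss vectors
  (rounds 1..t-1), availability sets and chosen arms of rounds 1..t.\<close>
definition history ::
  "(nat \<Rightarrow> 'w \<Rightarrow> 'k \<Rightarrow> real) \<Rightarrow> (nat \<Rightarrow> 'w \<Rightarrow> 'k set) \<Rightarrow> (nat \<Rightarrow> 'w \<Rightarrow> 'k) \<Rightarrow> nat \<Rightarrow> 'w
    \<Rightarrow> (nat \<Rightarrow> 'k \<Rightarrow> real) \<times> (nat \<Rightarrow> 'k set) \<times> (nat \<Rightarrow> 'k)" where
  "history L S k t \<omega> =
     (restrict (\<lambda>s. L s \<omega>) {1..<t}, restrict (\<lambda>s. S s \<omega>) {1..t}, restrict (\<lambda>s. k s \<omega>) {1..t})"

definition history_space :: "nat \<Rightarrow> ((nat \<Rightarrow> 'k \<Rightarrow> real) \<times> (nat \<Rightarrow> 'k set) \<times> (nat \<Rightarrow> 'k)) measure" where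
  "history_space t = Pi\<^sub>M {1..<t} (\<lambda>_. loss_space) \<Otimes>\<^sub>M
     (Pi\<^sub>M {1..t} (\<lambda>_. count_space UNIV) \<Otimes>\<^sub>M Pi\<^sub>M {1..t} (\<lambda>_. count_space UNIV))"

text \<open>Independence of two random variables with possibly different value types:
  the sigma-algebras they generate are independent (HOL's indep_var needs equal types).\<close>
definition indep_rvs :: "'w measure \<Rightarrow> 'a measure \<Rightarrow> ('w \<Rightarrow> 'a) \<Rightarrow> 'b measure \<Rightarrow> ('w \<Rightarrow> 'b) \<Rightarrow> bool" where
  "indep_rvs M Ma X Mb Y \<longleftrightarrow>
     prob_space.indep_set M {X -` A \<inter> space M | A. A \<in> sets Ma} {Y -` B \<inter> space M | B. B \<in> sets Mb}"

end

theory Submission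
  imports Defs
begin

text \<open>Since the loss vector of round t is independent of the availability set S t, the expected
  loss of any policy in round t equals the expectation of \<mu> (\<pi> (S t)); the learner's own loss
  does not depend on the comparator at all. Hence every policy regret has the form
  C - \<Sum>t. E[\<mu> (\<pi> (S t))], which is maximised by the greedy policy choosing the available arm of
  smallest mean. That policy is ord_select \<sigma> for an ordering \<sigma> sorting the arms by \<mu>, and the
  expected ordering regret of any \<sigma> is exactly the policy regret of ord_select \<sigma>.\<close>

lemma Int_stable_vimage_sets: "Int_stable {X -` A \<inter> space M | A. A \<in> sets N}"
proof (safe intro!: Int_stableI)
  fix A B assume "A \<in> sets N" "B \<in> sets N"
  then show "\<exists>C. (X -` A \<inter> space M) \<inter> (X -` B \<inter> space M) = X -` C \<inter> space M \<and> C \<in> sets N"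
    by (intro exI[of _ "A \<inter> B"]) auto
qed

lemma vimage_sets_comp_subset:
  assumes X: "X \<in> measurable M Ma" and g: "g \<in> measurable Ma N"
  shows "{(g \<circ> X) -` A \<inter> space M | A. A \<in> sets N} \<subseteq> {X -` A \<inter> space M | A. A \<in> sets Ma}"
proof safe
  fix A assume "A \<in> sets N"
  with g have "g -` A \<inter> space Ma \<in> sets Ma" by (rule measurable_sets)
  moreover have "(g \<circ> X) -` A \<inter> space M = X -` (g -` A \<inter> space Ma) \<inter> space M"
    using X by (auto dest: measurable_space)
  ultimately show "\<exists>B. (g \<circ> X) -` A \<inter> space M = X -` B \<inter> space M \<and> B \<in> sets Ma"
    by blast
qed

lemma (in prob_space) indep_rvs_compose:
  assumes "indep_rvs M Ma X Mb Y" "X \<in> measurable M Ma" "Y \<in> measurable M Mb"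
    and "g \<in> measurable Ma Na" "h \<in> measurable Mb Nb"
  shows "indep_rvs M Na (g \<circ> X) Nb (h \<circ> Y)"
  using assms(1) unfolding indep_rvs_def indep_set_def
  by (rule indep_sets_mono_sets)
    (use vimage_sets_comp_subset[OF assms(2,4)] vimage_sets_comp_subset[OF assms(3,5)]
      in \<open>auto split: bool.split\<close>)

lemma (in prob_space) indep_rvs_imp_indep_var:
  assumes "indep_rvs M Ma X Mb Y" "X \<in> measurable M Ma" "Y \<in> measurable M Mb"
  shows "indep_var Ma X Mb Y"
  unfolding indep_var_eq
  using assms by (auto simp: indep_rvs_def intro!: indep_set_sigma_sets Int_stable_vimage_sets)

lemma measurable_loss_component [measurable]: "(\<lambda>v. v j) \<in> borel_measurable loss_space"
  unfolding loss_space_def by (rule measurable_component_singleton) simp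

lemma measurable_eval_finite:
  fixes X :: "'w \<Rightarrow> 'k::finite \<Rightarrow> real"
  assumes "X \<in> measurable M loss_space" "Y \<in> measurable M (count_space UNIV)"
  shows "(\<lambda>\<omega>. X \<omega> (Y \<omega>)) \<in> borel_measurable M"
proof -
  have "(\<lambda>\<omega>. X \<omega> (Y \<omega>)) = (\<lambda>\<omega>. \<Sum>j\<in>UNIV. of_bool (Y \<omega> = j) * X \<omega> j)"
    by simp
  also have "\<dots> \<in> borel_measurable M"
    using assms by measurable
  finally show ?thesis .
qed

lemma (in prob_space) integral_eval_indep:
  fixes X :: "'a \<Rightarrow> 'k::finite \<Rightarrow> real" and Y :: "'a \<Rightarrow> 'k"
  assumes indep: "indep_rvs M loss_space X (count_space UNIV) Y"
    and X: "X \<in> measurable M loss_space" and Y: "Y \<in> measurable M (count_space UNIV)"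
    and int: "\<And>j. integrable M (\<lambda>\<omega>. X \<omega> j)"
  shows "(\<integral>\<omega>. X \<omega> (Y \<omega>) \<partial>M) = (\<integral>\<omega>. (\<integral>\<omega>'. X \<omega>' (Y \<omega>) \<partial>M) \<partial>M)"
proof -
  define I where "I j \<omega> = (of_bool (Y \<omega> = j) :: real)" for j \<omega>
  have I_measurable: "I j \<in> borel_measurable M" for j
    unfolding I_def by (rule measurable_compose[OF Y]) simp
  have int_I: "integrable M (I j)" for j
    by (rule integrable_const_bound[where B=1]) (use I_measurable in \<open>auto simp: I_def\<close>)
  have indep_j: "indep_var borel (\<lambda>\<omega>. X \<omega> j) borel (I j)" for j
  proof -
    have "indep_rvs M borel ((\<lambda>v. v j) \<circ> X) borel ((\<lambda>y. of_bool (y = j) :: real) \<circ> Y)"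
      by (rule indep_rvs_compose[OF indep X Y]) auto
    then show ?thesis
      using X I_measurable by (intro indep_rvs_imp_indep_var) (auto simp: comp_def I_def[abs_def])
  qed
  have "(\<integral>\<omega>. X \<omega> (Y \<omega>) \<partial>M) = (\<integral>\<omega>. (\<Sum>j\<in>UNIV. X \<omega> j * I j \<omega>) \<partial>M)"
    by (simp add: I_def)
  also have "\<dots> = (\<Sum>j\<in>UNIV. (\<integral>\<omega>. X \<omega> j * I j \<omega> \<partial>M))"
    by (intro Bochner_Integration.integral_sum indep_var_integrable[OF indep_j int int_I])
  also have "\<dots> = (\<Sum>j\<in>UNIV. (\<integral>\<omega>'. X \<omega>' j \<partial>M) * (\<integral>\<omega>. I j \<omega> \<partial>M))"
    by (intro sum.cong refl indep_var_lebesgue_integral[OF indep_j int int_I])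
  also have "\<dots> = (\<integral>\<omega>. (\<Sum>j\<in>UNIV. (\<integral>\<omega>'. X \<omega>' j \<partial>M) * I j \<omega>) \<partial>M)"
    by (simp add: int_I)
  also have "\<dots> = (\<integral>\<omega>. (\<integral>\<omega>'. X \<omega>' (Y \<omega>) \<partial>M) \<partial>M)"
    by (simp add: I_def)
  finally show ?thesis .
qed

lemma ord_select_in_policies:
  assumes "set \<sigma> = UNIV"
  shows "ord_select \<sigma> \<in> policies"
  unfolding policies_def ord_select_def
proof (intro CollectI allI impI)
  fix A :: "'a set" assume "A \<noteq> {}"
  then have "filter (\<lambda>x. x \<in> A) \<sigma> \<noteq> []" using assms by (auto simp: filter_empty_conv)
  then show "hd (filter (\<lambda>x. x \<in> A) \<sigma>) \<in> A"
    using hd_in_set by fastforce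
qed

lemma ord_select_sorted_min:
  fixes \<mu> :: "'a \<Rightarrow> 'b::linorder"
  assumes "sorted (map \<mu> \<sigma>)" "set \<sigma> = UNIV" "x \<in> A"
  shows "\<mu> (ord_select \<sigma> A) \<le> \<mu> x"
proof -
  have "sorted (map \<mu> (filter (\<lambda>y. y \<in> A) \<sigma>))" "x \<in> set (filter (\<lambda>y. y \<in> A) \<sigma>)"
    using assms by (auto simp: sorted_filter)
  then show ?thesis
    unfolding ord_select_def by (cases "filter (\<lambda>y. y \<in> A) \<sigma>") auto
qed

lemma finite_orderings: "finite (orderings :: 'a::finite list set)"
proof (rule finite_subset)
  show "orderings \<subseteq> {xs :: 'a list. set xs \<subseteq> UNIV \<and> length xs \<le> CARD('a)}"
    by (auto simp: orderings_def distinct_card[symmetric] card_mono)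
  show "finite {xs :: 'a list. set xs \<subseteq> UNIV \<and> length xs \<le> CARD('a)}"
    by (rule finite_lists_length_le) simp
qed

lemma ex_sorted_ordering: "\<exists>\<sigma>\<in>orderings. sorted (map (f :: 'a::finite \<Rightarrow> 'b::linorder) \<sigma>)"
proof -
  obtain xs :: "'a list" where "set xs = UNIV" "distinct xs"
    using finite_distinct_list[of "UNIV :: 'a set"] by auto
  then show ?thesis
    by (intro bexI[of _ "sort_key f xs"]) (auto simp: orderings_def)
qed

locale stochastic_sleeping_bandit = prob_space M
  for M :: "'w measure" +
  fixes L :: "nat \<Rightarrow> 'w \<Rightarrow> 'k::finite \<Rightarrow> real"
    and S :: "nat \<Rightarrow> 'w \<Rightarrow> 'k set"
    and k :: "nat \<Rightarrow> 'w \<Rightarrow> 'k"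
    and \<mu> :: "'k \<Rightarrow> real"
  assumes loss_measurable: "\<And>t. t \<ge> 1 \<Longrightarrow> L t \<in> measurable M loss_space"
    and avail_measurable: "\<And>t. t \<ge> 1 \<Longrightarrow> S t \<in> measurable M (count_space UNIV)"
    and arm_measurable: "\<And>t. t \<ge> 1 \<Longrightarrow> k t \<in> measurable M (count_space UNIV)"
    and loss_bounded: "\<And>t \<omega> j. t \<ge> 1 \<Longrightarrow> \<omega> \<in> space M \<Longrightarrow> 0 \<le> L t \<omega> j \<and> L t \<omega> j \<le> 1"
    and loss_identically_distributed:
      "\<And>t. t \<ge> 1 \<Longrightarrow> distr M loss_space (L t) = distr M loss_space (L 1)"
    and mean_loss: "\<And>j. \<mu> j = (\<integral>\<omega>. L 1 \<omega> j \<partial>M)"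
    and avail_nonempty: "\<And>t \<omega>. t \<ge> 1 \<Longrightarrow> \<omega> \<in> space M \<Longrightarrow> S t \<omega> \<noteq> {}"
    and loss_indep_history:
      "\<And>t. t \<ge> 1 \<Longrightarrow> indep_rvs M loss_space (L t) (history_space t) (history L S k t)"
begin

lemma history_measurable: "history L S k t \<in> measurable M (history_space t)"
  unfolding history_def[abs_def] history_space_def
  by (intro measurable_Pair measurable_restrict)
    (auto intro: loss_measurable avail_measurable arm_measurable)

lemma loss_indep_avail:
  assumes "t \<ge> 1"
  shows "indep_rvs M loss_space (L t) (count_space UNIV) (S t)"
proof -
  have "(\<lambda>h. fst (snd h) t) \<in> measurable (history_space t) (count_space UNIV)"
    unfolding history_space_def using assms
    by (intro measurable_compose[OF measurable_compose[OF measurable_snd measurable_fst]]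
        measurable_component_singleton) auto
  from indep_rvs_compose[OF loss_indep_history[OF assms] loss_measurable[OF assms]
      history_measurable measurable_id this]
  show ?thesis
    using assms by (simp add: comp_def history_def)
qed

lemma integrable_loss_eval:
  assumes "t \<ge> 1" "g \<in> measurable M (count_space UNIV)"
  shows "integrable M (\<lambda>\<omega>. L t \<omega> (g \<omega>))"
  by (rule integrable_const_bound[where B=1])
    (use loss_bounded[OF assms(1)] measurable_eval_finite[OF loss_measurable[OF assms(1)] assms(2)]
      in auto)

lemma integral_loss_component:
  assumes "t \<ge> 1"
  shows "(\<integral>\<omega>. L t \<omega> j \<partial>M) = \<mu> j"
proof -
  have "(\<integral>\<omega>. L t \<omega> j \<partial>M) = (\<integral>v. v j \<partial>distr M loss_space (L t))"
    by (rule integral_distr[OF loss_measurable[OF assms], symmetric]) simp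
  also have "\<dots> = (\<integral>v. v j \<partial>distr M loss_space (L 1))"
    using loss_identically_distributed[OF assms] by simp
  also have "\<dots> = \<mu> j"
    unfolding mean_loss by (rule integral_distr[OF loss_measurable]) simp_all
  finally show ?thesis .
qed

lemma mean_loss_bounded: "0 \<le> \<mu> j \<and> \<mu> j \<le> 1"
proof -
  have "0 \<le> \<mu> j"
    unfolding mean_loss by (rule integral_nonneg_AE) (use loss_bounded in auto)
  moreover have "\<mu> j \<le> (\<integral>\<omega>. 1 \<partial>M)"
    unfolding mean_loss
    by (rule integral_mono) (use loss_bounded integrable_loss_eval[of 1 "\<lambda>_. j"] in auto)
  ultimately show ?thesis by (simp add: prob_space)
qed

lemma integrable_mean_policy:
  assumes "t \<ge> 1"
  shows "integrable M (\<lambda>\<omega>. \<mu> (\<pi> (S t \<omega>)))"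
  by (rule integrable_const_bound[where B=1])
    (use mean_loss_bounded avail_measurable[OF assms] in \<open>auto intro: measurable_compose\<close>)

lemma expected_loss_eq_mean:
  assumes "t \<ge> 1"
  shows "(\<integral>\<omega>. L t \<omega> (\<pi> (S t \<omega>)) \<partial>M) = (\<integral>\<omega>. \<mu> (\<pi> (S t \<omega>)) \<partial>M)"
proof -
  have indep: "indep_rvs M loss_space (L t) (count_space UNIV) (\<lambda>\<omega>. \<pi> (S t \<omega>))"
    using indep_rvs_compose[OF loss_indep_avail[OF assms] loss_measurable[OF assms]
        avail_measurable[OF assms] measurable_id, where h = \<pi> and Nb = "count_space UNIV"]
    by (simp add: comp_def)
  show ?thesis
    using assms
    by (subst integral_eval_indep[OF indep])
      (auto simp: integral_loss_component intro: loss_measurable integrable_loss_eval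
        measurable_compose[OF avail_measurable])
qed

lemma policy_regret_eq:
  "policy_regret M L S k T \<pi> =
     (\<integral>\<omega>. (\<Sum>t\<in>{1..T}. L t \<omega> (k t \<omega>)) \<partial>M) - (\<Sum>t\<in>{1..T}. \<integral>\<omega>. \<mu> (\<pi> (S t \<omega>)) \<partial>M)"
proof -
  have "(\<integral>\<omega>. (\<Sum>t\<in>{1..T}. L t \<omega> (\<pi> (S t \<omega>))) \<partial>M) = (\<Sum>t\<in>{1..T}. \<integral>\<omega>. L t \<omega> (\<pi> (S t \<omega>)) \<partial>M)"
    by (intro Bochner_Integration.integral_sum integrable_loss_eval
        measurable_compose[OF avail_measurable]) auto
  also have "\<dots> = (\<Sum>t\<in>{1..T}. \<integral>\<omega>. \<mu> (\<pi> (S t \<omega>)) \<partial>M)"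
    by (intro sum.cong refl expected_loss_eq_mean) simp
  finally show ?thesis
    unfolding policy_regret_def by simp
qed

lemma integral_ordering_regret:
  "(\<integral>\<omega>. ordering_regret L S k T \<sigma> \<omega> \<partial>M) = policy_regret M L S k T (ord_select \<sigma>)"
  unfolding ordering_regret_def policy_regret_def sum_subtractf
  by (intro Bochner_Integration.integral_diff Bochner_Integration.integrable_sum
      integrable_loss_eval arm_measurable measurable_compose[OF avail_measurable]) auto

lemma policy_regret_le_sorted_ordering:
  assumes "sorted (map \<mu> \<sigma>)" "set \<sigma> = UNIV" "\<pi> \<in> policies"
  shows "policy_regret M L S k T \<pi> \<le> policy_regret M L S k T (ord_select \<sigma>)"
proof -
  have "(\<Sum>t\<in>{1..T}. \<integral>\<omega>. \<mu> (ord_select \<sigma> (S t \<omega>)) \<partial>M) \<le> (\<Sum>t\<in>{1..T}. \<integral>\<omega>. \<mu> (\<pi> (S t \<omega>)) \<partial>M)"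
  proof (intro sum_mono integral_mono integrable_mean_policy)
    fix t \<omega> assume "t \<in> {1..T}" "\<omega> \<in> space M"
    then have "\<pi> (S t \<omega>) \<in> S t \<omega>"
      using assms(3) avail_nonempty by (auto simp: policies_def)
    then show "\<mu> (ord_select \<sigma> (S t \<omega>)) \<le> \<mu> (\<pi> (S t \<omega>))"
      by (rule ord_select_sorted_min[OF assms(1,2)])
  qed auto
  then show ?thesis
    unfolding policy_regret_eq by simp
qed

end

theorem mainTheorem7:
  fixes M :: "'w measure"
    and L :: "nat \<Rightarrow> 'w \<Rightarrow> 'k::finite \<Rightarrow> real"
    and S :: "nat \<Rightarrow> 'w \<Rightarrow> 'k set"
    and k :: "nat \<Rightarrow> 'w \<Rightarrow> 'k"
    and \<mu> :: "'k \<Rightarrow> real"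
    and T :: nat
  assumes prob: "prob_space M"
    and meas_l: "\<And>t. t \<ge> 1 \<Longrightarrow> L t \<in> measurable M loss_space"
    and meas_S: "\<And>t. t \<ge> 1 \<Longrightarrow> S t \<in> measurable M (count_space UNIV)"
    and meas_k: "\<And>t. t \<ge> 1 \<Longrightarrow> k t \<in> measurable M (count_space UNIV)"
    and range_l: "\<And>t \<omega> j. t \<ge> 1 \<Longrightarrow> \<omega> \<in> space M \<Longrightarrow> 0 \<le> L t \<omega> j \<and> L t \<omega> j \<le> 1"
    and iid_indep: "prob_space.indep_vars M (\<lambda>_. loss_space) L {1..}"
    and iid_ident: "\<And>t. t \<ge> 1 \<Longrightarrow> distr M loss_space (L t) = distr M loss_space (L 1)"
    and mean: "\<And>j. \<mu> j = (\<integral>\<omega>. L 1 \<omega> j \<partial>M)"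
    and S_nonempty: "\<And>t \<omega>. t \<ge> 1 \<Longrightarrow> \<omega> \<in> space M \<Longrightarrow> S t \<omega> \<noteq> {}"
    and k_avail: "\<And>t \<omega>. t \<ge> 1 \<Longrightarrow> \<omega> \<in> space M \<Longrightarrow> k t \<omega> \<in> S t \<omega>"
    and indep_hist: "\<And>t. t \<ge> 1 \<Longrightarrow>
       indep_rvs M loss_space (L t) (history_space t) (history L S k t)"
  shows "Max (policy_regret M L S k T ` policies)
       = Max ((\<lambda>\<sigma>. \<integral>\<omega>. ordering_regret L S k T \<sigma> \<omega> \<partial>M) ` orderings)"
proof -
  interpret stochastic_sleeping_bandit M L S k \<mu>
    by (intro stochastic_sleeping_bandit.intro stochastic_sleeping_bandit_axioms.intro)
      (fact prob meas_l meas_S meas_k range_l iid_ident mean S_nonempty indep_hist)+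
  let ?R = "policy_regret M L S k T"
  obtain \<sigma> where \<sigma>: "\<sigma> \<in> orderings" "sorted (map \<mu> \<sigma>)"
    using ex_sorted_ordering by blast
  then have greedy: "ord_select \<sigma> \<in> policies" "\<And>\<pi>. \<pi> \<in> policies \<Longrightarrow> ?R \<pi> \<le> ?R (ord_select \<sigma>)"
    by (auto simp: orderings_def intro: ord_select_in_policies policy_regret_le_sorted_ordering)
  have "Max (?R ` policies) = ?R (ord_select \<sigma>)"
    by (rule Max_eqI) (use greedy in auto)
  also have "\<dots> = Max ((\<lambda>\<sigma>. \<integral>\<omega>. ordering_regret L S k T \<sigma> \<omega> \<partial>M) ` orderings)"
    by (rule Max_eqI[symmetric])
      (use \<sigma>(1) greedy finite_orderings in \<open>auto simp: integral_ordering_regret orderings_def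
        intro: ord_select_in_policies\<close>)
  finally show ?thesis .
qed

end
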